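(* Let $C$ be a field of characteristic zero with algebraic closure $\bar C$, and let $L=\ell_0+\ell_1S+\cdots+\ell_rS^r\in C(x)[S]$ with $\ell_0,\ell_r\ne0$, where $S$ is the shift operator with $Sx=(x+1)S$. Let $V=\bar C(x)[S]/\langle L\rangle$ with $\langle L\rangle=\bar C(x)[S]L$, a $\bar C(x)$-vector space. For $z\in\bar C$ define $\operatorname{val}_z\colon V\to\mathbb{Z}\cup\{\infty\}$ by \[\operatorname{val}_z(B)=\min_{b\in\operatorname{Sol}(L)}\Bigl(\nu_q((B\cdot b)(z))-\liminf_{n\to\infty}\nu_q(b(z-n))\Bigr),\] with the convention $\infty-\infty=\infty$. Then $\operatorname{val}_z$ is a value function on $V$ with respect to the valuation $\nu_z$ on $\bar C(x)$.
   Context: Let $q$ be a new indeterminate. For an orbit $z+\mathbb{Z}$, an operator $A=a_0+a_1S+\cdots+a_mS^m\in\bar C(x)[S]$ acts on a sequence $f\colon z+\mathbb{Z}\to\bar C((q))$ by $(A\cdot f)(w)=a_0(w+q)f(w)+a_1(w+q)f(w+1)+\cdots+a_m(w+q)f(w+m)$ for $w\in z+\mathbb{Z}$ (no coefficient has a pole at $w+q$). $\operatorname{Sol}(L)=\{f\colon z+\mathbb{Z}\to\bar C((q)) : L\cdot f=0\}$, an $r$-dimensional $\bar C((q))$-vector space; for $B\in V$ and $b\in\operatorname{Sol}(L)$, $B\cdot b$ is well defined using any representative of $B$. For nonzero $a\in\bar C((q))$, $\nu_q(a)$ is the least $n$ with nonzero coefficient of $q^n$, and $\nu_q(0)=\infty$.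 For nonzero $f\in\bar C(x)$, $\nu_z(f)$ is the integer $m$ with $f=(x-z)^ma/b$, $a,b\in\bar C[x]$ not divisible by $x-z$; $\nu_z(0)=\infty$. A value function on $V$ w.r.t. $\nu_z$ is a map $\operatorname{val}$ with $\operatorname{val}(v)=\infty\iff v=0$, $\operatorname{val}(av)=\nu_z(a)+\operatorname{val}(v)$ for $a\in\bar C(x)$, and $\operatorname{val}(v+w)\ge\min(\operatorname{val}(v),\operatorname{val}(w))$. *)

theory Defs
  imports "HOL-Computational_Algebra.Computational_Algebra" "HOL-Library.Extended_Real"
begin

text \<open>Rational functions in x over a field 'a are modelled as 'a poly fract.
  Laurent series in q are 'a fls (q = fls_X).\<close>

text \<open>A representative (numerator, denominator) of a fraction; the definitions below are
  independent of the choice of representative.\<close>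
definition rf_num :: "'a::idom fract \<Rightarrow> 'a" where "rf_num r = fst (rep_fract r)"
definition rf_den :: "'a::idom fract \<Rightarrow> 'a" where "rf_den r = snd (rep_fract r)"

definition rf_shift :: "'a::field \<Rightarrow> 'a poly fract \<Rightarrow> 'a poly fract" where
  "rf_shift c r = Fract (pcompose (rf_num r) [:c, 1:]) (pcompose (rf_den r) [:c, 1:])"

definition rf_to_fls :: "'a::field poly fract \<Rightarrow> 'a fls" where
  "rf_to_fls r = fps_to_fls (fps_of_poly (rf_num r)) / fps_to_fls (fps_of_poly (rf_den r))"

text \<open>Evaluation of a rational function a at w + q, giving a Laurent series in q.\<close>
definition rf_eval_q :: "'a::field \<Rightarrow> 'a poly fract \<Rightarrow> 'a fls" where
  "rf_eval_q w a = rf_to_fls (rf_shift w a)"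

definition nu_q :: "'a::field fls \<Rightarrow> ereal" where
  "nu_q a = (if a = 0 then \<infinity> else ereal (of_int (fls_subdegree a)))"

definition nu_z :: "'a::field \<Rightarrow> 'a poly fract \<Rightarrow> ereal" where
  "nu_z z r = (if r = 0 then \<infinity>
     else ereal (of_int (int (order z (rf_num r)) - int (order z (rf_den r)))))"

text \<open>Operators in C(x)[S] are represented by their coefficient polynomial in S:
  B = sum_i coeff B i * S^i.\<close>

definition ore_mult :: "'a::field poly fract poly \<Rightarrow> 'a poly fract poly \<Rightarrow> 'a poly fract poly" where
  "ore_mult A B = (\<Sum>i\<le>degree A. \<Sum>j\<le>degree B.
      monom (coeff A i * rf_shift (of_nat i) (coeff B j)) (i + j))"

definition in_left_ideal :: "'a::field poly fract poly \<Rightarrow> 'a poly fract poly \<Rightarrow> bool" where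
  "in_left_ideal L B \<longleftrightarrow> (\<exists>A. B = ore_mult A L)"

text \<open>Action on sequences on the orbit z + Z; f n stands for f(z + n).\<close>
definition op_act :: "'a::field \<Rightarrow> 'a poly fract poly \<Rightarrow> (int \<Rightarrow> 'a fls) \<Rightarrow> int \<Rightarrow> 'a fls" where
  "op_act z A f n = (\<Sum>i\<le>degree A. rf_eval_q (z + of_int n) (coeff A i) * f (n + int i))"

definition Sol :: "'a::field \<Rightarrow> 'a poly fract poly \<Rightarrow> (int \<Rightarrow> 'a fls) set" where
  "Sol z L = {f. \<forall>n. op_act z L f n = 0}"

definition val_z :: "'a::field \<Rightarrow> 'a poly fract poly \<Rightarrow> 'a poly fract poly \<Rightarrow> ereal" where
  "val_z z L B = (INF b\<in>Sol z L.
      (let m = liminf (\<lambda>n::nat. nu_q (b (- int n)))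
       in if m = \<infinity> then \<infinity> else nu_q (op_act z B b 0) - m))"

text \<open>C(x) inside Cbar(x): rational functions with coefficients in the subfield Cs.\<close>
definition rf_over :: "'a::field set \<Rightarrow> 'a poly fract \<Rightarrow> bool" where
  "rf_over Cs a \<longleftrightarrow> (\<exists>p d. d \<noteq> 0 \<and> set (coeffs p) \<subseteq> Cs \<and> set (coeffs d) \<subseteq> Cs \<and> a = Fract p d)"

definition is_subfield :: "'a::field set \<Rightarrow> bool" where
  "is_subfield Cs \<longleftrightarrow> 0 \<in> Cs \<and> 1 \<in> Cs \<and> (\<forall>a\<in>Cs. \<forall>b\<in>Cs. a + b \<in> Cs \<and> a * b \<in> Cs)
     \<and> (\<forall>a\<in>Cs. - a \<in> Cs \<and> inverse a \<in> Cs)"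

definition algebraic_over :: "'a::field set \<Rightarrow> bool" where
  "algebraic_over Cs \<longleftrightarrow> (\<forall>x. \<exists>p. p \<noteq> 0 \<and> set (coeffs p) \<subseteq> Cs \<and> poly p x = 0)"

end

theory Submission
  imports Defs
begin

text \<open>Write r for the order of L and b for a solution. At points z - n far to the left all
  coefficients of L, evaluated at z - n + q, are units of C[[q]]; there the recurrence neither
  lowers nor raises the minimal q-valuation of r consecutive values of b, so the liminf in the
  definition of val_z is this window minimum, finite unless b = 0. Walking from the window to z
  costs a loss of valuation that is bounded independently of b, so the values
  nu_q((B.b)(z)) - liminf are bounded below and val_z is an integer or infinity. Elements of the
  left ideal annihilate every solution; conversely, after division by L a remainder of order
  below r is detected by the solutions with unit initial values. Compatibility with scalars and
  the ultrametric inequality hold solution by solution.\<close>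

section \<open>Polynomial composition and extended reals\<close>

lemma pcompose_power_left: "(p ^ n) \<circ>\<^sub>p q = (p \<circ>\<^sub>p q) ^ n"
  by (induction n) (simp_all add: pcompose_mult pcompose_1)

lemma pcompose_linear_eq_0_iff [simp]: "p \<circ>\<^sub>p [:c, 1:] = 0 \<longleftrightarrow> (p::'a::field poly) = 0"
  using pcompose_eq_0_iff[of "[:c, 1:]" p] by auto

lemma order_0_pcompose_linear:
  assumes "(p::'a::field poly) \<noteq> 0"
  shows "order 0 (p \<circ>\<^sub>p [:c, 1:]) = order c p"
proof -
  obtain g where g: "p = [:- c, 1:] ^ order c p * g" "\<not> [:- c, 1:] dvd g"
    using order_decomp[OF assms] by blast
  have "p \<circ>\<^sub>p [:c, 1:] = [:- 0, 1:] ^ order c p * (g \<circ>\<^sub>p [:c, 1:])"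
    by (subst g(1)) (simp add: pcompose_mult pcompose_power_left pcompose_pCons)
  moreover have "poly (g \<circ>\<^sub>p [:c, 1:]) 0 \<noteq> 0"
    using g(2) by (simp add: poly_pcompose poly_eq_0_iff_dvd)
  ultimately show ?thesis
    using order_power_n_n[of 0 "order c p"] by (auto simp: order_mult order_root)
qed

lemma ereal_le_by_int_bounds:
  assumes "a = \<infinity> \<or> (\<exists>k::int. a = ereal (of_int k))"
    and "\<And>k::int. ereal (of_int k) \<le> a \<Longrightarrow> ereal (of_int k) \<le> b"
  shows "a \<le> b"
proof (cases "a = \<infinity>")
  case True
  then have all: "\<And>k::int. ereal (of_int k) \<le> b" using assms(2) by simp
  show ?thesis
  proof (cases b)
    case (real r)
    have "ereal (of_int (\<lceil>r\<rceil> + 1)) \<le> b" by (rule all)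
    then show ?thesis using real by simp linarith
  qed (use all[of 0] in simp_all)
next
  case False
  then show ?thesis using assms by force
qed

lemma ereal_min_minus: "min (x::ereal) y - m = min (x - m) (y - m)"
proof (cases "x \<le> y")
  case True
  then have "x - m \<le> y - m" by (rule ereal_minus_mono) simp
  then show ?thesis using True by (simp add: min_def)
next
  case False
  then have "y - m \<le> x - m" by (intro ereal_minus_mono) simp_all
  then show ?thesis using False by (simp add: min_def)
qed

lemma Inf_infinity_or_int:
  fixes S :: "ereal set"
  assumes "\<forall>x\<in>S. x = \<infinity> \<or> (\<exists>k::int. x = ereal (of_int k) \<and> c \<le> k)"
  shows "Inf S = \<infinity> \<or> (\<exists>k::int. Inf S = ereal (of_int k))"
proof (cases "\<forall>x\<in>S. x = \<infinity>")
  case True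
  then show ?thesis using Inf_top_conv(1)[of S] by (simp add: top_ereal_def)
next
  case False
  then obtain k0 :: int where k0: "ereal (of_int k0) \<in> S" "c \<le> k0" using assms by blast
  define T where "T = {n::nat. ereal (of_int (c + int n)) \<in> S}"
  have "nat (k0 - c) \<in> T" using k0 by (simp add: T_def)
  define n0 where "n0 = (LEAST n. n \<in> T)"
  have n0T: "n0 \<in> T" unfolding n0_def using \<open>nat (k0 - c) \<in> T\<close> by (rule LeastI)
  have "Inf S = ereal (of_int (c + int n0))"
  proof (rule antisym)
    show "Inf S \<le> ereal (of_int (c + int n0))" using n0T by (simp add: T_def Inf_lower)
    show "ereal (of_int (c + int n0)) \<le> Inf S"
    proof (rule Inf_greatest)
      fix x assume "x \<in> S"
      then consider "x = \<infinity>" | k :: int where "x = ereal (of_int k)" "c \<le> k" using assms by blast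
      then show "ereal (of_int (c + int n0)) \<le> x"
      proof cases
        case 2
        then have "nat (k - c) \<in> T" using \<open>x \<in> S\<close> by (simp add: T_def)
        then have "n0 \<le> nat (k - c)" unfolding n0_def by (rule Least_le)
        then show ?thesis using 2 by simp
      qed simp
    qed
  qed
  then show ?thesis by blast
qed

lemma INF_add_const_ereal:
  fixes c :: ereal
  assumes "\<bar>c\<bar> \<noteq> \<infinity>"
  shows "(INF x\<in>S. c + g x) = c + (INF x\<in>S. g x)"
proof -
  have ge: "d + (INF x\<in>S. h x) \<le> (INF x\<in>S. d + h x)" for d :: ereal and h
    by (rule INF_greatest) (intro add_left_mono INF_lower)
  have inv: "- c + (c + y) = y" for y :: ereal
    using assms by (cases c; cases y; simp)
  have "- c + (INF x\<in>S. c + g x) \<le> (INF x\<in>S. g x)"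
    using ge[of "- c" "\<lambda>x. c + g x"] by (simp add: inv)
  then have "c + (- c + (INF x\<in>S. c + g x)) \<le> c + (INF x\<in>S. g x)" by (rule add_left_mono)
  then have "(INF x\<in>S. c + g x) \<le> c + (INF x\<in>S. g x)"
    using assms by (cases c; cases "INF x\<in>S. c + g x"; simp)
  then show ?thesis using ge[of c g] by (rule antisym)
qed

section \<open>Evaluation of rational functions at w + q\<close>

lemma rf_num_den: "rf_den r \<noteq> 0" "Fract (rf_num r) (rf_den r) = r"
proof -
  have q: "Quotient3 fractrel abs_fract rep_fract" by (rule Quotient3_fract)
  have "fractrel (rep_fract r) (rep_fract r)" using Quotient3_rep_reflp[OF q] .
  then show "rf_den r \<noteq> 0" by (simp add: rf_den_def)
  then show "Fract (rf_num r) (rf_den r) = r"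
    using Quotient3_abs_rep[OF q, of r] by (simp add: Fract_def rf_num_def rf_den_def)
qed

lemma rf_num_eq_0_iff: "rf_num a = 0 \<longleftrightarrow> a = 0"
  using eq_fract(1)[OF rf_num_den(1) one_neq_zero, of "rf_num a" a 0] rf_num_den(2)[of a]
  by (simp add: Zero_fract_def)

definition poly_to_fls :: "'a::field poly \<Rightarrow> 'a fls" where
  "poly_to_fls p = fps_to_fls (fps_of_poly p)"

lemma poly_to_fls_simps [simp]:
  "poly_to_fls (p + q) = poly_to_fls p + poly_to_fls q"
  "poly_to_fls (p * q) = poly_to_fls p * poly_to_fls q"
  "poly_to_fls 0 = 0" "poly_to_fls 1 = 1"
  by (simp_all add: poly_to_fls_def fps_of_poly_add fps_of_poly_mult fps_to_fls_plus
      fls_times_fps_to_fls)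

lemma poly_to_fls_eq_0_iff [simp]: "poly_to_fls p = 0 \<longleftrightarrow> p = 0"
  unfolding poly_to_fls_def by (metis fps_to_fls_eq_0_iff fps_of_poly_0 fps_of_poly_eq_iff)

lemma rf_to_fls_Fract:
  assumes "d \<noteq> 0"
  shows "rf_to_fls (Fract p d) = poly_to_fls p / poly_to_fls d"
proof -
  let ?r = "Fract p d"
  have "rf_num ?r * d = p * rf_den ?r"
    using rf_num_den[of ?r] eq_fract(1)[OF rf_num_den(1) assms] by simp
  then have "poly_to_fls (rf_num ?r) * poly_to_fls d = poly_to_fls p * poly_to_fls (rf_den ?r)"
    by (metis poly_to_fls_simps(2))
  then show ?thesis
    using assms rf_num_den(1)[of ?r] by (simp add: rf_to_fls_def poly_to_fls_def [symmetric] frac_eq_eq)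
qed

lemma rf_shift_Fract:
  assumes "d \<noteq> 0"
  shows "rf_shift c (Fract p d) = Fract (p \<circ>\<^sub>p [:c, 1:]) (d \<circ>\<^sub>p [:c, 1:])"
proof -
  let ?r = "Fract p d"
  have "rf_num ?r * d = p * rf_den ?r"
    using rf_num_den[of ?r] eq_fract(1)[OF rf_num_den(1) assms] by simp
  then have "(rf_num ?r \<circ>\<^sub>p [:c, 1:]) * (d \<circ>\<^sub>p [:c, 1:])
      = (p \<circ>\<^sub>p [:c, 1:]) * (rf_den ?r \<circ>\<^sub>p [:c, 1:])"
    by (metis pcompose_mult)
  then show ?thesis
    using assms rf_num_den(1)[of ?r] by (simp add: rf_shift_def eq_fract)
qed

definition poly_eval_q :: "'a::field \<Rightarrow> 'a poly \<Rightarrow> 'a fls" where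
  "poly_eval_q w p = poly_to_fls (p \<circ>\<^sub>p [:w, 1:])"

lemma poly_eval_q_simps [simp]:
  "poly_eval_q w (p + q) = poly_eval_q w p + poly_eval_q w q"
  "poly_eval_q w (p * q) = poly_eval_q w p * poly_eval_q w q"
  "poly_eval_q w 0 = 0" "poly_eval_q w 1 = 1"
  by (simp_all add: poly_eval_q_def pcompose_add pcompose_mult pcompose_1)

lemma poly_eval_q_eq_0_iff [simp]: "poly_eval_q w p = 0 \<longleftrightarrow> p = 0"
  by (simp add: poly_eval_q_def)

lemma poly_eval_q_pcompose: "poly_eval_q w (p \<circ>\<^sub>p [:c, 1:]) = poly_eval_q (c + w) p"
  by (simp add: poly_eval_q_def pcompose_assoc [symmetric] pcompose_pCons add.commute)

lemma rf_eval_q_Fract: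
  assumes "d \<noteq> 0"
  shows "rf_eval_q w (Fract p d) = poly_eval_q w p / poly_eval_q w d"
  using assms by (simp add: rf_eval_q_def rf_shift_Fract rf_to_fls_Fract poly_eval_q_def)

lemma rf_eval_q_num_den: "rf_eval_q w a = poly_eval_q w (rf_num a) / poly_eval_q w (rf_den a)"
  by (metis rf_eval_q_Fract rf_num_den)

lemma rf_eval_q_add [simp]: "rf_eval_q w (a + b) = rf_eval_q w a + rf_eval_q w b"
proof (cases a; cases b)
  fix p d p' d' assume ab: "a = Fract p d" "d \<noteq> 0" "b = Fract p' d'" "d' \<noteq> 0"
  then have "rf_eval_q w (a + b) = poly_eval_q w (p * d' + p' * d) / poly_eval_q w (d * d')"
    by (simp add: rf_eval_q_Fract del: poly_eval_q_simps)
  then show ?thesis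
    using ab by (simp add: rf_eval_q_Fract add_frac_eq)
qed

lemma rf_eval_q_mult [simp]: "rf_eval_q w (a * b) = rf_eval_q w a * rf_eval_q w b"
  by (cases a; cases b) (simp add: rf_eval_q_Fract)

lemma rf_eval_q_0 [simp]: "rf_eval_q w 0 = 0"
  by (simp add: Zero_fract_def rf_eval_q_Fract)

lemma rf_eval_q_eq_0_iff [simp]: "rf_eval_q w a = 0 \<longleftrightarrow> a = 0"
  by (cases a) (auto simp: rf_eval_q_Fract eq_fract Zero_fract_def)

lemma rf_eval_q_rf_shift [simp]: "rf_eval_q w (rf_shift c a) = rf_eval_q (c + w) a"
  by (cases a) (simp add: rf_eval_q_Fract rf_shift_Fract poly_eval_q_pcompose)

lemma rf_shift_eq_0_iff [simp]: "rf_shift c a = 0 \<longleftrightarrow> a = 0"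
  by (metis rf_eval_q_eq_0_iff rf_eval_q_rf_shift)

lemma fls_subdegree_poly_eval_q: "p \<noteq> 0 \<Longrightarrow> fls_subdegree (poly_eval_q c p) = int (order c p)"
  by (simp add: poly_eval_q_def poly_to_fls_def fls_subdegree_fls_to_fps subdegree_fps_of_poly
      order_0_pcompose_linear)

lemma fls_subdegree_rf_eval_q:
  "a \<noteq> 0 \<Longrightarrow> fls_subdegree (rf_eval_q c a) = int (order c (rf_num a)) - int (order c (rf_den a))"
  using rf_num_den(1)[of a]
  by (simp add: rf_eval_q_num_den fls_divide_subdegree fls_subdegree_poly_eval_q rf_num_eq_0_iff)

lemma nu_q_rf_eval_q: "nu_q (rf_eval_q z a) = nu_z z a"
  by (cases "a = 0") (auto simp: nu_q_def nu_z_def fls_subdegree_rf_eval_q)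

text \<open>Characteristic zero is used here: w \<mapsto> z + w is injective on Z.\<close>
lemma finite_nonunit_shifts:
  fixes z :: "'a::field_char_0"
  assumes "a \<noteq> 0"
  shows "finite {w::int. fls_subdegree (rf_eval_q (z + of_int w) a) \<noteq> 0}"
proof -
  let ?h = "\<lambda>w::int. z + of_int w"
  have inj: "inj ?h" by (auto simp: inj_def)
  have "{w. fls_subdegree (rf_eval_q (?h w) a) \<noteq> 0}
      \<subseteq> ?h -` {x. poly (rf_num a) x = 0} \<union> ?h -` {x. poly (rf_den a) x = 0}"
    using assms by (auto simp: fls_subdegree_rf_eval_q order_root)
  moreover have "finite (?h -` {x. poly (rf_num a) x = 0})"
    using assms by (intro finite_vimageI[OF poly_roots_finite inj]) (simp add: rf_num_eq_0_iff)
  moreover have "finite (?h -` {x. poly (rf_den a) x = 0})"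
    by (intro finite_vimageI[OF poly_roots_finite inj]) (simp add: rf_num_den(1))
  ultimately show ?thesis by (meson finite_Un finite_subset)
qed

section \<open>Operators acting on sequences\<close>

lemma op_act_degree_le:
  assumes "degree A \<le> N"
  shows "op_act z A f n = (\<Sum>i\<le>N. rf_eval_q (z + of_int n) (coeff A i) * f (n + int i))"
  unfolding op_act_def
  by (rule sum.mono_neutral_left) (use assms in \<open>auto simp: coeff_eq_0 not_le\<close>)

lemma op_act_add: "op_act z (A + B) f n = op_act z A f n + op_act z B f n"
proof -
  let ?N = "max (degree A) (degree B)"
  have "degree (A + B) \<le> ?N" by (rule degree_add_le) auto
  then show ?thesis
    by (simp add: op_act_degree_le[of _ ?N] sum.distrib distrib_right)
qed

lemma op_act_smult: "op_act z (smult a A) f n = rf_eval_q (z + of_int n) a * op_act z A f n"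
  using degree_smult_le[of a A]
  by (simp add: op_act_degree_le[of _ "degree A"] sum_distrib_left mult.assoc)

lemma op_act_monom: "op_act z (monom c k) f n = rf_eval_q (z + of_int n) c * f (n + int k)"
  using degree_monom_le[of c k]
  by (simp add: op_act_degree_le[of _ k] coeff_monom if_distrib if_distribR cong: if_cong)

lemma op_act_0 [simp]: "op_act z 0 f n = 0"
  by (simp add: op_act_def)

lemma op_act_sum: "finite S \<Longrightarrow> op_act z (\<Sum>s\<in>S. g s) f n = (\<Sum>s\<in>S. op_act z (g s) f n)"
  by (induction S rule: finite_induct) (simp_all add: op_act_add)

lemma op_act_ore_mult: "op_act z (ore_mult A B) f n = op_act z A (op_act z B f) n"
proof -
  have "op_act z (ore_mult A B) f n =
    (\<Sum>i\<le>degree A. \<Sum>j\<le>degree B. rf_eval_q (z + of_int n) (coeff A i) *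
        (rf_eval_q (z + of_int (n + int i)) (coeff B j) * f (n + int i + int j)))"
    unfolding ore_mult_def
    by (simp add: op_act_sum op_act_monom add.commute add.left_commute mult.assoc)
  also have "\<dots> = op_act z A (op_act z B f) n"
    by (simp add: op_act_def sum_distrib_left)
  finally show ?thesis .
qed

lemma op_act_left_ideal_Sol:
  assumes "in_left_ideal L P" "b \<in> Sol z L"
  shows "op_act z P b n = 0"
proof -
  obtain A where "P = ore_mult A L" using assms(1) unfolding in_left_ideal_def by blast
  moreover have "op_act z L b = (\<lambda>_. 0)" using assms(2) by (auto simp: Sol_def)
  ultimately show ?thesis by (simp add: op_act_ore_mult) (simp add: op_act_def)
qed

lemma ore_mult_degree_le:
  assumes "degree A \<le> N" "degree B \<le> M"
  shows "ore_mult A B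
    = (\<Sum>i\<le>N. \<Sum>j\<le>M. monom (coeff A i * rf_shift (of_nat i) (coeff B j)) (i + j))"
proof -
  have "ore_mult A B = (\<Sum>i\<le>N. \<Sum>j\<le>degree B. monom (coeff A i * rf_shift (of_nat i) (coeff B j)) (i + j))"
    unfolding ore_mult_def
    by (rule sum.mono_neutral_left) (use assms in \<open>auto simp: coeff_eq_0 not_le\<close>)
  then show ?thesis
    by (simp, intro sum.cong[OF refl] sum.mono_neutral_left)
      (use assms in \<open>auto simp: coeff_eq_0 not_le\<close>)
qed

lemma ore_mult_add_left: "ore_mult (A1 + A2) B = ore_mult A1 B + ore_mult A2 B"
proof -
  let ?N = "max (degree A1) (degree A2)"
  have "degree (A1 + A2) \<le> ?N" by (rule degree_add_le) auto
  then show ?thesis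
    by (simp add: ore_mult_degree_le[of _ ?N _ "degree B"] sum.distrib [symmetric]
        distrib_right add_monom [symmetric])
qed

lemma coeff_ore_mult_monom:
  "coeff (ore_mult (monom c k) B) m = (if k \<le> m then c * rf_shift (of_nat k) (coeff B (m - k)) else 0)"
proof -
  have "ore_mult (monom c k) B
      = (\<Sum>j\<le>degree B. monom (c * rf_shift (of_nat k) (coeff B j)) (k + j))"
  proof -
    have "ore_mult (monom c k) B = (\<Sum>i\<le>k. \<Sum>j\<le>degree B.
        monom (coeff (monom c k) i * rf_shift (of_nat i) (coeff B j)) (i + j))"
      by (rule ore_mult_degree_le) (auto simp: degree_monom_le)
    also have "\<dots> = (\<Sum>i\<in>{k}. \<Sum>j\<le>degree B.
        monom (coeff (monom c k) i * rf_shift (of_nat i) (coeff B j)) (i + j))"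
      by (rule sum.mono_neutral_right) (auto simp: coeff_monom)
    finally show ?thesis by (simp add: coeff_monom)
  qed
  then have "coeff (ore_mult (monom c k) B) m
      = (\<Sum>j\<le>degree B. if j = m - k \<and> k \<le> m then c * rf_shift (of_nat k) (coeff B j) else 0)"
    by (auto simp: coeff_sum coeff_monom intro!: sum.cong)
  then show ?thesis
    by (auto simp: coeff_eq_0)
qed

lemma ore_mult_0_left [simp]: "ore_mult 0 B = 0"
  by (simp add: ore_mult_def)

lemma ore_division_bounded:
  assumes "lead_coeff L \<noteq> 0" "\<forall>m\<ge>N. coeff B m = 0"
  shows "\<exists>A R. B = ore_mult A L + R \<and> (\<forall>i\<ge>degree L. coeff R i = 0)"
  using assms(2)
proof (induction N arbitrary: B)
  case 0
  then have "B = 0" by (intro poly_eqI) simp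
  then show ?case by (intro exI[of _ 0]) simp
next
  case (Suc N)
  show ?case
  proof (cases "N < degree L")
    case True
    then show ?thesis using Suc.prems by (intro exI[of _ 0] exI[of _ B]) simp
  next
    case False
    define k where "k = N - degree L"
    define c where "c = coeff B N / rf_shift (of_nat k) (lead_coeff L)"
    have "coeff (B - ore_mult (monom c k) L) m = 0" if "N \<le> m" for m
    proof (cases "m = N")
      case True
      then show ?thesis
        using False assms(1) by (simp add: coeff_ore_mult_monom k_def c_def)
    next
      case False
      then have "Suc N \<le> m" "degree L < m - k" using \<open>N \<le> m\<close> \<open>\<not> N < degree L\<close> by (auto simp: k_def)
      then show ?thesis using Suc.prems by (simp add: coeff_ore_mult_monom coeff_eq_0)
    qed
    then obtain A R where "B - ore_mult (monom c k) L = ore_mult A L + R" "\<forall>i\<ge>degree L. coeff R i = 0"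
      using Suc.IH by blast
    then show ?thesis
      by (intro exI[of _ "A + monom c k"] exI[of _ R]) (simp add: ore_mult_add_left algebra_simps)
  qed
qed

lemma ore_division:
  assumes "lead_coeff L \<noteq> 0"
  shows "\<exists>A R. B = ore_mult A L + R \<and> (\<forall>i\<ge>degree L. coeff R i = 0)"
  using ore_division_bounded[OF assms, of "Suc (degree B)"] by (auto simp: coeff_eq_0)

section \<open>The q-adic valuation\<close>

definition vanishes_below :: "'a::field fls \<Rightarrow> int \<Rightarrow> bool" where
  "vanishes_below x k \<longleftrightarrow> (\<forall>j<k. fls_nth x j = 0)"

lemma vanishes_below_0 [simp]: "vanishes_below 0 k"
  by (simp add: vanishes_below_def)

lemma vanishes_below_subdegree: "vanishes_below x (fls_subdegree x)"
  by (simp add: vanishes_below_def)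

lemma vanishes_below_iff: "x \<noteq> 0 \<Longrightarrow> vanishes_below x k \<longleftrightarrow> k \<le> fls_subdegree x"
  unfolding vanishes_below_def using nth_fls_subdegree_nonzero[of x]
  by (metis fls_eq0_below_subdegree le_less_trans not_le)

lemma vanishes_below_mono: "vanishes_below x k \<Longrightarrow> j \<le> k \<Longrightarrow> vanishes_below x j"
  by (simp add: vanishes_below_def)

lemma vanishes_below_uminus: "vanishes_below x k \<Longrightarrow> vanishes_below (- x) k"
  by (simp add: vanishes_below_def)

lemma vanishes_below_sum:
  "finite S \<Longrightarrow> (\<And>s. s \<in> S \<Longrightarrow> vanishes_below (g s) k) \<Longrightarrow> vanishes_below (\<Sum>s\<in>S. g s) k"
  by (induction S rule: finite_induct) (auto simp: vanishes_below_def)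

lemma vanishes_below_mult:
  assumes "vanishes_below x a" "vanishes_below y b"
  shows "vanishes_below (x * y) (a + b)"
proof (cases "x = 0 \<or> y = 0")
  case False
  then show ?thesis
    using assms by (auto simp: vanishes_below_iff fls_subdegree_mult)
qed auto

lemma vanishes_below_divide:
  "y \<noteq> 0 \<Longrightarrow> vanishes_below x a \<Longrightarrow> vanishes_below (x / y) (a - fls_subdegree y)"
  using vanishes_below_mult[of x a "inverse y" "- fls_subdegree y"]
    vanishes_below_subdegree[of "inverse y"]
  by (simp add: divide_inverse fls_inverse_subdegree)

lemma vanishes_below_all_imp_0: "(\<And>k. vanishes_below x k) \<Longrightarrow> x = 0"
  using vanishes_below_iff[of x "fls_subdegree x + 1"] by fastforce

lemma vanishes_below_iff_nu_q: "vanishes_below x k \<longleftrightarrow> ereal (of_int k) \<le> nu_q x"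
  by (cases "x = 0") (auto simp: nu_q_def vanishes_below_iff)

lemma nu_q_infinity_or_int: "nu_q x = \<infinity> \<or> (\<exists>k::int. nu_q x = ereal (of_int k))"
  by (auto simp: nu_q_def)

lemma nu_q_neq_minf [simp]: "nu_q x \<noteq> -\<infinity>"
  by (simp add: nu_q_def)

lemma nu_q_mult: "nu_q (x * y) = nu_q x + nu_q y"
  by (auto simp: nu_q_def fls_subdegree_mult)

lemma nu_q_add: "min (nu_q x) (nu_q y) \<le> nu_q (x + y)"
  by (cases "x = 0 \<or> y = 0 \<or> x + y = 0")
    (auto simp: nu_q_def min_def dest: fls_plus_subdegree)

section \<open>The recurrence along the orbit\<close>

definition coeff_at_q :: "'a::field \<Rightarrow> 'a poly fract poly \<Rightarrow> nat \<Rightarrow> int \<Rightarrow> 'a fls" where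
  "coeff_at_q z L i w = rf_eval_q (z + of_int w) (coeff L i)"

lemma Sol_iff: "f \<in> Sol z L \<longleftrightarrow> (\<forall>n. (\<Sum>i\<le>degree L. coeff_at_q z L i n * f (n + int i)) = 0)"
  by (simp add: Sol_def op_act_def coeff_at_q_def)

lemma Sol_forward:
  assumes "f \<in> Sol z L" "lead_coeff L \<noteq> 0"
  shows "f (n + int (degree L))
    = - (\<Sum>i<degree L. coeff_at_q z L i n * f (n + int i)) / coeff_at_q z L (degree L) n"
proof -
  have "(\<Sum>i<degree L. coeff_at_q z L i n * f (n + int i))
      + coeff_at_q z L (degree L) n * f (n + int (degree L)) = 0"
    using assms(1) by (simp add: Sol_iff lessThan_Suc_atMost [symmetric])
  then show ?thesis
    using assms(2) by (simp add: coeff_at_q_def eq_divide_eq add_eq_0_iff2 mult.commute)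
qed

lemma Sol_backward:
  assumes "f \<in> Sol z L" "coeff L 0 \<noteq> 0"
  shows "f n = - (\<Sum>i\<in>{1..degree L}. coeff_at_q z L i n * f (n + int i)) / coeff_at_q z L 0 n"
proof -
  have "{..degree L} = insert 0 {1..degree L}" by auto
  then have "coeff_at_q z L 0 n * f n + (\<Sum>i\<in>{1..degree L}. coeff_at_q z L i n * f (n + int i)) = 0"
    using assms(1) by (simp add: Sol_iff)
  then show ?thesis
    using assms(2) by (simp add: coeff_at_q_def eq_divide_eq add_eq_0_iff mult.commute)
qed

definition window_ge :: "'a::field poly fract poly \<Rightarrow> (int \<Rightarrow> 'a fls) \<Rightarrow> int \<Rightarrow> int \<Rightarrow> bool" where
  "window_ge L f w k \<longleftrightarrow> (\<forall>i<degree L. vanishes_below (f (w + int i)) k)"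

definition window_val :: "'a::field poly fract poly \<Rightarrow> (int \<Rightarrow> 'a fls) \<Rightarrow> int \<Rightarrow> ereal" where
  "window_val L f w = (INF i\<in>{..<degree L}. nu_q (f (w + int i)))"

text \<open>The valuation that one step of the forward recurrence can lose at w.\<close>
definition step_loss :: "'a::field \<Rightarrow> 'a poly fract poly \<Rightarrow> int \<Rightarrow> int" where
  "step_loss z L w = (\<Sum>i\<le>degree L. \<bar>fls_subdegree (coeff_at_q z L i w)\<bar>)
    + \<bar>fls_subdegree (coeff_at_q z L (degree L) w)\<bar>"

text \<open>Vanishing coefficients do not obstruct regularity, since fls_subdegree 0 = 0.\<close>
definition regular_point :: "'a::field \<Rightarrow> 'a poly fract poly \<Rightarrow> int \<Rightarrow> bool" where
  "regular_point z L w \<longleftrightarrow> (\<forall>i\<le>degree L. fls_subdegree (coeff_at_q z L i w) = 0)"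

lemma step_loss_nonneg: "0 \<le> step_loss z L w"
  unfolding step_loss_def by (intro add_nonneg_nonneg sum_nonneg) auto

lemma step_loss_regular_point: "regular_point z L w \<Longrightarrow> step_loss z L w = 0"
  by (simp add: regular_point_def step_loss_def)

lemma window_ge_succ_iff:
  "window_ge L f (w + 1) k \<longleftrightarrow> (\<forall>i\<in>{1..degree L}. vanishes_below (f (w + int i)) k)"
  unfolding window_ge_def
proof safe
  fix i assume "\<forall>i<degree L. vanishes_below (f (w + 1 + int i)) k" "i \<in> {1..degree L}"
  moreover have "w + 1 + int (i - 1) = w + int i" "i - 1 < degree L" using \<open>i \<in> {1..degree L}\<close> by auto
  ultimately show "vanishes_below (f (w + int i)) k" by metis
next
  fix i assume "\<forall>i\<in>{1..degree L}. vanishes_below (f (w + int i)) k" "i < degree L"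
  moreover have "w + 1 + int i = w + int (Suc i)" "Suc i \<in> {1..degree L}" using \<open>i < degree L\<close> by auto
  ultimately show "vanishes_below (f (w + 1 + int i)) k" by metis
qed

lemma vanishes_below_Sol_forward:
  assumes "f \<in> Sol z L" "lead_coeff L \<noteq> 0" "window_ge L f w k"
  shows "vanishes_below (f (w + int (degree L))) (k - step_loss z L w)"
proof -
  let ?r = "degree L" and ?e = "\<lambda>i. coeff_at_q z L i w"
  have "vanishes_below (?e j * f (w + int j)) (k - step_loss z L w + fls_subdegree (?e ?r))"
    if j: "j < ?r" for j
  proof -
    have "vanishes_below (?e j * f (w + int j)) (fls_subdegree (?e j) + k)"
      using vanishes_below_mult[OF vanishes_below_subdegree[of "?e j"], of "f (w + int j)" k]
        assms(3) j by (simp add: window_ge_def)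
    moreover have "\<bar>fls_subdegree (?e j)\<bar> \<le> (\<Sum>i\<le>?r. \<bar>fls_subdegree (?e i)\<bar>)"
      using j by (intro member_le_sum) auto
    then have "k - step_loss z L w + fls_subdegree (?e ?r) \<le> fls_subdegree (?e j) + k"
      using abs_ge_self[of "fls_subdegree (?e ?r)"] abs_ge_minus_self[of "fls_subdegree (?e j)"]
      unfolding step_loss_def by linarith
    ultimately show ?thesis
      by (rule vanishes_below_mono)
  qed
  then have "vanishes_below (- (\<Sum>j<?r. ?e j * f (w + int j)))
      (k - step_loss z L w + fls_subdegree (?e ?r))"
    by (intro vanishes_below_uminus vanishes_below_sum) auto
  moreover have "?e ?r \<noteq> 0" using assms(2) by (simp add: coeff_at_q_def)
  ultimately have "vanishes_below (- (\<Sum>j<?r. ?e j * f (w + int j)) / ?e ?r) (k - step_loss z L w)"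
    using vanishes_below_divide by fastforce
  then show ?thesis
    using Sol_forward[OF assms(1,2)] by simp
qed

lemma vanishes_below_Sol_backward:
  assumes "f \<in> Sol z L" "coeff L 0 \<noteq> 0" "regular_point z L w" "window_ge L f (w + 1) k"
  shows "vanishes_below (f w) k"
proof -
  let ?e = "\<lambda>i. coeff_at_q z L i w"
  have "vanishes_below (?e j * f (w + int j)) k" if j: "j \<in> {1..degree L}" for j
  proof -
    have "vanishes_below (f (w + int j)) k" using assms(4) j by (simp add: window_ge_succ_iff)
    then have "vanishes_below (?e j * f (w + int j)) (fls_subdegree (?e j) + k)"
      by (rule vanishes_below_mult[OF vanishes_below_subdegree])
    moreover have "fls_subdegree (?e j) = 0" using assms(3) j by (simp add: regular_point_def)
    ultimately show ?thesis by simp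
  qed
  then have "vanishes_below (- (\<Sum>j\<in>{1..degree L}. ?e j * f (w + int j))) k"
    by (intro vanishes_below_uminus vanishes_below_sum) auto
  moreover have "?e 0 \<noteq> 0" using assms(2) by (simp add: coeff_at_q_def)
  ultimately have "vanishes_below (- (\<Sum>j\<in>{1..degree L}. ?e j * f (w + int j)) / ?e 0)
      (k - fls_subdegree (?e 0))"
    by (intro vanishes_below_divide)
  moreover have "fls_subdegree (?e 0) = 0" using assms(3) by (simp add: regular_point_def)
  ultimately show ?thesis
    using Sol_backward[OF assms(1,2), of w] by simp
qed

lemma window_ge_Sol_step_forward:
  assumes "f \<in> Sol z L" "lead_coeff L \<noteq> 0" "window_ge L f w k"
  shows "window_ge L f (w + 1) (k - step_loss z L w)"
  unfolding window_ge_succ_iff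
proof
  fix i assume i: "i \<in> {1..degree L}"
  show "vanishes_below (f (w + int i)) (k - step_loss z L w)"
  proof (cases "i = degree L")
    case True
    then show ?thesis using vanishes_below_Sol_forward[OF assms] by simp
  next
    case False
    then have "vanishes_below (f (w + int i)) k" using assms(3) i by (simp add: window_ge_def)
    then show ?thesis by (rule vanishes_below_mono) (simp add: step_loss_nonneg)
  qed
qed

lemma window_ge_Sol_step_backward:
  assumes "f \<in> Sol z L" "coeff L 0 \<noteq> 0" "regular_point z L w" "window_ge L f (w + 1) k"
  shows "window_ge L f w k"
  unfolding window_ge_def
proof (intro allI impI)
  fix i assume i: "i < degree L"
  show "vanishes_below (f (w + int i)) k"
  proof (cases "i = 0")
    case True
    then show ?thesis using vanishes_below_Sol_backward[OF assms] by simp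
  next
    case False
    then have "i \<in> {1..degree L}" using i by simp
    then show ?thesis using assms(4) by (simp add: window_ge_succ_iff)
  qed
qed

lemma window_ge_Sol_forward:
  assumes "f \<in> Sol z L" "lead_coeff L \<noteq> 0" "window_ge L f w k"
  shows "window_ge L f (w + int t) (k - (\<Sum>s<t. step_loss z L (w + int s)))"
proof (induction t)
  case (Suc t)
  then show ?case
    using window_ge_Sol_step_forward[OF assms(1,2) Suc.IH] by (simp add: add.assoc algebra_simps)
qed (use assms(3) in simp)

lemma Sol_vanishes_below_right:
  assumes "lead_coeff L \<noteq> 0" "degree L \<ge> 1"
  shows "\<exists>C. \<forall>f\<in>Sol z L. \<forall>k. window_ge L f w k \<longrightarrow>
    (\<forall>j. w \<le> j \<and> j \<le> u \<longrightarrow> vanishes_below (f j) (k - C))"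
proof (intro exI ballI allI impI)
  let ?C = "\<lambda>t. \<Sum>s<t. step_loss z L (w + int s)"
  fix f k j assume f: "f \<in> Sol z L" and W: "window_ge L f w k" and j: "w \<le> j \<and> j \<le> u"
  define t where "t = nat (j - w)"
  have "window_ge L f (w + int t) (k - ?C t)"
    using window_ge_Sol_forward[OF f assms(1) W] .
  moreover have "w + int t = j" using j by (simp add: t_def)
  ultimately have "vanishes_below (f (j + int 0)) (k - ?C t)"
    using assms(2) unfolding window_ge_def by (metis less_one order_less_le_trans)
  then have "vanishes_below (f j) (k - ?C t)" by simp
  moreover have "?C t \<le> ?C (nat (u - w))"
    using j step_loss_nonneg by (intro sum_mono2) (auto simp: t_def)
  ultimately show "vanishes_below (f j) (k - ?C (nat (u - w)))"
    by (elim vanishes_below_mono) simp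
qed

lemma window_ge_iff_window_val: "window_ge L f w k \<longleftrightarrow> ereal (of_int k) \<le> window_val L f w"
  by (auto simp: window_ge_def window_val_def le_INF_iff vanishes_below_iff_nu_q)

lemma window_val_attained:
  assumes "degree L \<ge> 1"
  shows "\<exists>i<degree L. window_val L f w = nu_q (f (w + int i))"
proof -
  let ?A = "(\<lambda>i. nu_q (f (w + int i))) ` {..<degree L}"
  have "Inf ?A \<in> ?A"
    by (rule finite_Inf_in) (use assms in \<open>auto simp: inf_min min_def lessThan_empty_iff\<close>)
  then show ?thesis unfolding window_val_def by auto
qed

lemma window_val_infinity_or_int:
  "window_val L f w = \<infinity> \<or> (\<exists>k::int. window_val L f w = ereal (of_int k))"
proof (cases "degree L = 0")
  case True
  then show ?thesis by (simp add: window_val_def top_ereal_def)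
next
  case False
  then show ?thesis
    using window_val_attained[of L f w] nu_q_infinity_or_int by fastforce
qed

lemma exists_regular_points_left:
  fixes z :: "'a::field_char_0"
  shows "\<exists>N::int. N \<le> -1 \<and> (\<forall>w\<le>N. regular_point z L w)"
proof -
  define S where "S = (\<Union>i\<in>{i. i \<le> degree L \<and> coeff L i \<noteq> 0}.
    {w. fls_subdegree (rf_eval_q (z + of_int w) (coeff L i)) \<noteq> 0})"
  have "finite S"
    unfolding S_def by (intro finite_UN_I) (simp_all add: finite_nonunit_shifts)
  define M where "M = Min (insert 0 S)"
  have M: "M \<le> w" if "w \<in> S" for w
    unfolding M_def using \<open>finite S\<close> that by simp
  have "regular_point z L w" if "w \<le> min (-1) (M - 1)" for w
  proof (rule ccontr)
    assume "\<not> regular_point z L w"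
    then obtain i where i: "i \<le> degree L" "fls_subdegree (coeff_at_q z L i w) \<noteq> 0"
      unfolding regular_point_def by blast
    then have "coeff L i \<noteq> 0" by (auto simp: coeff_at_q_def)
    with i have "w \<in> S" unfolding S_def coeff_at_q_def by blast
    then show False using M[of w] that by simp
  qed
  then show ?thesis by (intro exI[of _ "min (-1) (M - 1)"]) auto
qed

lemma window_ge_Sol_regular_left:
  assumes "f \<in> Sol z L" "coeff L 0 \<noteq> 0" "lead_coeff L \<noteq> 0" "\<forall>w\<le>N. regular_point z L w"
    and "w \<le> N + 1"
  shows "window_ge L f w k \<longleftrightarrow> window_ge L f (N + 1) k"
  using assms(5)
proof (induction w rule: int_le_induct)
  case (step w)
  have "regular_point z L (w - 1)" using assms(4) step.hyps by simp
  then have "window_ge L f (w - 1) k \<longleftrightarrow> window_ge L f w k"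
    using window_ge_Sol_step_forward[OF assms(1,3), of "w - 1" k]
      window_ge_Sol_step_backward[OF assms(1,2), of "w - 1" k]
    by (auto simp: step_loss_regular_point)
  then show ?case using step.IH by simp
qed simp

lemma window_val_Sol_regular_left:
  assumes "f \<in> Sol z L" "coeff L 0 \<noteq> 0" "lead_coeff L \<noteq> 0" "\<forall>w\<le>N. regular_point z L w"
    and "w \<le> N + 1"
  shows "window_val L f w = window_val L f (N + 1)"
proof -
  have "ereal (of_int k) \<le> window_val L f w \<longleftrightarrow> ereal (of_int k) \<le> window_val L f (N + 1)" for k
    using window_ge_Sol_regular_left[OF assms, of k] by (simp add: window_ge_iff_window_val)
  then show ?thesis
    by (intro antisym ereal_le_by_int_bounds[OF window_val_infinity_or_int]) blast+
qed

text \<open>On the regular part of the orbit the window minimum is constant and attained infinitely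
  often, so it is the liminf.\<close>
lemma liminf_Sol_eq_window_val:
  assumes "f \<in> Sol z L" "coeff L 0 \<noteq> 0" "lead_coeff L \<noteq> 0" "\<forall>w\<le>N. regular_point z L w"
    and "degree L \<ge> 1"
  shows "liminf (\<lambda>n::nat. nu_q (f (- int n))) = window_val L f (N + 1)"
proof (rule antisym)
  let ?W = "window_val L f (N + 1)"
  note W = window_val_Sol_regular_left[OF assms(1-4)]
  have "?W \<le> nu_q (f (- int n))" if "nat (- (N + 1)) \<le> n" for n
  proof -
    have "?W = window_val L f (- int n)" using W[of "- int n"] that by simp
    also have "\<dots> \<le> nu_q (f (- int n + int 0))"
      unfolding window_val_def using assms(5) by (intro INF_lower) simp
    finally show ?thesis by simp
  qed
  then show "?W \<le> liminf (\<lambda>n::nat. nu_q (f (- int n)))"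
    by (intro Liminf_bounded) (auto simp: eventually_sequentially)
  show "liminf (\<lambda>n::nat. nu_q (f (- int n))) \<le> ?W"
  proof (rule ccontr)
    assume "\<not> ?thesis"
    then have "?W < liminf (\<lambda>n::nat. nu_q (f (- int n)))" by (simp add: not_le)
    then have "eventually (\<lambda>n. ?W < nu_q (f (- int n))) sequentially"
      by (rule less_LiminfD)
    then obtain n0 where n0: "\<And>n. n \<ge> n0 \<Longrightarrow> ?W < nu_q (f (- int n))"
      unfolding eventually_sequentially by blast
    define w where "w = min (N + 1) (- int n0 - int (degree L))"
    obtain i where i: "i < degree L" "window_val L f w = nu_q (f (w + int i))"
      using window_val_attained[OF assms(5)] by blast
    define n where "n = nat (- (w + int i))"
    have "n \<ge> n0" "- int n = w + int i"
      using i(1) by (auto simp: n_def w_def)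
    then have "?W < nu_q (f (w + int i))" using n0[of n] by simp
    moreover have "window_val L f w = ?W" by (rule W) (simp add: w_def)
    ultimately show False using i(2) by simp
  qed
qed

lemma Sol_vanishes_below_window_right:
  assumes "lead_coeff L \<noteq> 0" "degree L \<ge> 1" "w \<le> 0"
  shows "\<exists>C. \<forall>f\<in>Sol z L. \<forall>k. window_ge L f w k \<longrightarrow> (\<forall>j\<le>T. vanishes_below (f (int j)) (k - C))"
proof -
  obtain C where C: "\<forall>f\<in>Sol z L. \<forall>k. window_ge L f w k \<longrightarrow>
      (\<forall>j. w \<le> j \<and> j \<le> int T \<longrightarrow> vanishes_below (f j) (k - C))"
    using Sol_vanishes_below_right[OF assms(1,2)] by blast
  then show ?thesis using assms(3) by (intro exI[of _ C]) auto
qed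

lemma op_act_Sol_vanishes_below:
  assumes "lead_coeff L \<noteq> 0" "degree L \<ge> 1" "w \<le> 0"
  shows "\<exists>K. \<forall>f\<in>Sol z L. \<forall>k. window_ge L f w k \<longrightarrow> vanishes_below (op_act z P f 0) (k - K)"
proof -
  obtain C where C: "\<forall>f\<in>Sol z L. \<forall>k. window_ge L f w k \<longrightarrow>
      (\<forall>j\<le>degree P. vanishes_below (f (int j)) (k - C))"
    using Sol_vanishes_below_window_right[OF assms] by blast
  define K where "K = (\<Sum>j\<le>degree P. \<bar>fls_subdegree (rf_eval_q z (coeff P j))\<bar>)"
  show ?thesis
  proof (intro exI[of _ "C + K"] ballI allI impI)
    fix f k assume f: "f \<in> Sol z L" and W: "window_ge L f w k"
    have "vanishes_below (rf_eval_q z (coeff P j) * f (int j)) (k - (C + K))" if j: "j \<le> degree P" for j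
    proof -
      have "vanishes_below (f (int j)) (k - C)" using C f W j by blast
      then have "vanishes_below (rf_eval_q z (coeff P j) * f (int j))
          (fls_subdegree (rf_eval_q z (coeff P j)) + (k - C))"
        by (rule vanishes_below_mult[OF vanishes_below_subdegree])
      moreover have "\<bar>fls_subdegree (rf_eval_q z (coeff P j))\<bar> \<le> K"
        unfolding K_def using j by (intro member_le_sum) auto
      then have "k - (C + K) \<le> fls_subdegree (rf_eval_q z (coeff P j)) + (k - C)" by linarith
      ultimately show ?thesis by (rule vanishes_below_mono)
    qed
    then show "vanishes_below (op_act z P f 0) (k - (C + K))"
      unfolding op_act_def by (intro vanishes_below_sum) auto
  qed
qed

lemma Sol_eq_0_right_of_zero_window:
  assumes "b \<in> Sol z L" "lead_coeff L \<noteq> 0" "degree L \<ge> 1" "w \<le> 0"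
    and "window_val L b w = \<infinity>"
  shows "b (int j) = 0"
proof -
  obtain C where C: "\<forall>f\<in>Sol z L. \<forall>k. window_ge L f w k \<longrightarrow> (\<forall>i\<le>j. vanishes_below (f (int i)) (k - C))"
    using Sol_vanishes_below_window_right[OF assms(2-4)] by blast
  have "window_ge L b w (k + C)" for k
    using assms(5) by (simp add: window_ge_iff_window_val)
  then have "vanishes_below (b (int j)) k" for k
    using C assms(1) by (metis add_diff_cancel_right' order_refl)
  then show ?thesis by (rule vanishes_below_all_imp_0)
qed

text \<open>The solution with initial values g(0), ..., g(r - 1), computed by the forward recurrence to
  the right and by the backward recurrence to the left.\<close>
function sol_extend :: "'a::field \<Rightarrow> 'a poly fract poly \<Rightarrow> (int \<Rightarrow> 'a fls) \<Rightarrow> int \<Rightarrow> 'a fls" where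
  "sol_extend z L g k =
    (if 0 \<le> k \<and> k < int (degree L) then g k
     else if int (degree L) \<le> k then
       - (\<Sum>i<degree L. coeff_at_q z L i (k - int (degree L))
            * sol_extend z L g (k - int (degree L) + int i))
         / coeff_at_q z L (degree L) (k - int (degree L))
     else - (\<Sum>i\<in>{1..degree L}. coeff_at_q z L i k * sol_extend z L g (k + int i))
       / coeff_at_q z L 0 k)"
  by auto
termination
  by (relation "measure (\<lambda>(z, L, g, k). nat (if k < 0 then int (degree L) - k else k))") auto

declare sol_extend.simps [simp del]

lemma sol_extend_initial: "0 \<le> k \<Longrightarrow> k < int (degree L) \<Longrightarrow> sol_extend z L g k = g k"
  by (subst sol_extend.simps) simp

lemma sol_extend_Sol:
  assumes "coeff L 0 \<noteq> 0" "lead_coeff L \<noteq> 0"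
  shows "sol_extend z L g \<in> Sol z L"
  unfolding Sol_iff
proof
  fix n :: int
  let ?r = "degree L" and ?b = "sol_extend z L g" and ?e = "\<lambda>i. coeff_at_q z L i n"
  show "(\<Sum>i\<le>?r. ?e i * ?b (n + int i)) = 0"
  proof (cases "0 \<le> n")
    case True
    have "?b (n + int ?r) = - (\<Sum>i<?r. ?e i * ?b (n + int i)) / ?e ?r"
      using True by (subst sol_extend.simps) simp
    then have "(\<Sum>i<?r. ?e i * ?b (n + int i)) + ?e ?r * ?b (n + int ?r) = 0"
      using assms(2) by (simp add: coeff_at_q_def)
    then show ?thesis by (simp add: lessThan_Suc_atMost [symmetric])
  next
    case False
    have "?b n = - (\<Sum>i\<in>{1..?r}. ?e i * ?b (n + int i)) / ?e 0"
      using False by (subst sol_extend.simps) simp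
    then have "?e 0 * ?b n + (\<Sum>i\<in>{1..?r}. ?e i * ?b (n + int i)) = 0"
      using assms(1) by (simp add: coeff_at_q_def)
    moreover have "{..?r} = insert 0 {1..?r}" by auto
    ultimately show ?thesis by simp
  qed
qed

section \<open>The value function\<close>

definition val_at_sol :: "'a::field \<Rightarrow> 'a poly fract poly \<Rightarrow> (int \<Rightarrow> 'a fls) \<Rightarrow> ereal" where
  "val_at_sol z B b = (let m = liminf (\<lambda>n::nat. nu_q (b (- int n)))
     in if m = \<infinity> then \<infinity> else nu_q (op_act z B b 0) - m)"

lemma val_z_eq_INF: "val_z z L B = (INF b\<in>Sol z L. val_at_sol z B b)"
  by (simp add: val_z_def val_at_sol_def)

lemma val_at_sol_eq_window_val:
  assumes "b \<in> Sol z L" "coeff L 0 \<noteq> 0" "lead_coeff L \<noteq> 0" "\<forall>w\<le>N. regular_point z L w"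
    and "degree L \<ge> 1"
  shows "val_at_sol z B b = (if window_val L b (N + 1) = \<infinity> then \<infinity>
    else nu_q (op_act z B b 0) - window_val L b (N + 1))"
  using liminf_Sol_eq_window_val[OF assms] by (simp add: val_at_sol_def)

lemma val_at_sol_add: "min (val_at_sol z B1 b) (val_at_sol z B2 b) \<le> val_at_sol z (B1 + B2) b"
proof -
  let ?m = "liminf (\<lambda>n::nat. nu_q (b (- int n)))"
  have "min (nu_q (op_act z B1 b 0)) (nu_q (op_act z B2 b 0)) - ?m
      \<le> nu_q (op_act z (B1 + B2) b 0) - ?m"
    by (intro ereal_minus_mono) (simp_all add: op_act_add nu_q_add)
  then show ?thesis by (simp add: val_at_sol_def Let_def ereal_min_minus)
qed

lemma val_at_sol_smult:
  assumes "a \<noteq> 0"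
  shows "val_at_sol z (smult a B) b = nu_z z a + val_at_sol z B b"
proof -
  define c where "c = int (order z (rf_num a)) - int (order z (rf_den a))"
  have c: "nu_z z a = ereal (of_int c)" using assms by (simp add: nu_z_def c_def)
  have "nu_q (op_act z (smult a B) b 0) = nu_z z a + nu_q (op_act z B b 0)"
    by (simp add: op_act_smult nu_q_mult nu_q_rf_eval_q)
  moreover have "(ereal (of_int c) + x) - m = ereal (of_int c) + (x - m)"
    if "m \<noteq> \<infinity>" "x \<noteq> -\<infinity>" for x m :: ereal
    using that by (cases x; cases m) simp_all
  ultimately show ?thesis using c by (simp add: val_at_sol_def Let_def)
qed

lemma val_z_left_ideal:
  assumes "in_left_ideal L P"
  shows "val_z z L P = \<infinity>"
proof -
  have "val_at_sol z P b = \<infinity>" if "b \<in> Sol z L" for b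
    using op_act_left_ideal_Sol[OF assms that] by (simp add: val_at_sol_def Let_def nu_q_def)
  then show ?thesis by (simp add: val_z_eq_INF INF_top_conv flip: top_ereal_def)
qed

lemma val_z_cong: "in_left_ideal L (B1 - B2) \<Longrightarrow> val_z z L B1 = val_z z L B2"
proof -
  assume h: "in_left_ideal L (B1 - B2)"
  have "op_act z B1 b 0 = op_act z B2 b 0" if "b \<in> Sol z L" for b
    using op_act_left_ideal_Sol[OF h that, of 0] op_act_add[of z "B1 - B2" B2 b 0] by simp
  then show ?thesis by (simp add: val_z_eq_INF val_at_sol_def Let_def)
qed

lemma val_z_add: "min (val_z z L B1) (val_z z L B2) \<le> val_z z L (B1 + B2)"
  unfolding val_z_eq_INF
proof (rule INF_greatest)
  fix b assume "b \<in> Sol z L"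
  then have "min (INF b\<in>Sol z L. val_at_sol z B1 b) (INF b\<in>Sol z L. val_at_sol z B2 b)
      \<le> min (val_at_sol z B1 b) (val_at_sol z B2 b)"
    by (intro min.mono INF_lower)
  also have "\<dots> \<le> val_at_sol z (B1 + B2) b" by (rule val_at_sol_add)
  finally show "min (INF b\<in>Sol z L. val_at_sol z B1 b) (INF b\<in>Sol z L. val_at_sol z B2 b)
      \<le> val_at_sol z (B1 + B2) b" .
qed

lemma val_z_smult: "val_z z L (smult a B) = nu_z z a + val_z z L B"
proof (cases "a = 0")
  case True
  then show ?thesis
    using val_z_left_ideal[of L 0 z] by (simp add: in_left_ideal_def nu_z_def exI[of _ 0])
next
  case False
  define c where "c = int (order z (rf_num a)) - int (order z (rf_den a))"
  have c: "nu_z z a = ereal (of_int c)" using False by (simp add: nu_z_def c_def)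
  have "val_z z L (smult a B) = (INF b\<in>Sol z L. nu_z z a + val_at_sol z B b)"
    by (simp add: val_z_eq_INF val_at_sol_smult[OF False])
  also have "\<dots> = nu_z z a + val_z z L B"
    unfolding val_z_eq_INF c by (rule INF_add_const_ereal) simp
  finally show ?thesis .
qed

lemma left_ideal_degree_0:
  assumes "degree L = 0" "lead_coeff L \<noteq> 0"
  shows "in_left_ideal L B"
proof -
  obtain A R where "B = ore_mult A L + R" "\<forall>i\<ge>degree L. coeff R i = 0"
    using ore_division[OF assms(2)] by blast
  moreover from this have "R = 0" using assms(1) by (intro poly_eqI) simp
  ultimately show ?thesis unfolding in_left_ideal_def by auto
qed

lemma val_at_sol_infinity_or_int_ge:
  assumes "b \<in> Sol z L" "coeff L 0 \<noteq> 0" "lead_coeff L \<noteq> 0" "\<forall>w\<le>N. regular_point z L w"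
    and "degree L \<ge> 1"
    and K: "\<forall>k. window_ge L b (N + 1) k \<longrightarrow> vanishes_below (op_act z B b 0) (k - K)"
  shows "val_at_sol z B b = \<infinity> \<or> (\<exists>k::int. val_at_sol z B b = ereal (of_int k) \<and> - K \<le> k)"
proof (cases "window_val L b (N + 1) = \<infinity> \<or> op_act z B b 0 = 0")
  case True
  then show ?thesis
    using window_val_infinity_or_int[of L b "N + 1"]
    by (auto simp: val_at_sol_eq_window_val[OF assms(1-5)] nu_q_def)
next
  case False
  then obtain m :: int where m: "window_val L b (N + 1) = ereal (of_int m)"
    using window_val_infinity_or_int by blast
  then have "vanishes_below (op_act z B b 0) (m - K)"
    using K by (simp add: window_ge_iff_window_val)
  then have "m - K \<le> fls_subdegree (op_act z B b 0)"
    using False vanishes_below_iff by blast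
  then show ?thesis
    using False m
    by (intro disjI2 exI[of _ "fls_subdegree (op_act z B b 0) - m"])
      (simp add: val_at_sol_eq_window_val[OF assms(1-5)] nu_q_def)
qed

lemma val_z_infinity_or_int:
  fixes z :: "'a::field_char_0"
  assumes "coeff L 0 \<noteq> 0" "lead_coeff L \<noteq> 0"
  shows "val_z z L B = \<infinity> \<or> (\<exists>k::int. val_z z L B = ereal (of_int k))"
proof (cases "degree L = 0")
  case True
  then show ?thesis using val_z_left_ideal left_ideal_degree_0 assms(2) by blast
next
  case False
  then have deg: "degree L \<ge> 1" by simp
  obtain N :: int where N: "N \<le> -1" "\<forall>w\<le>N. regular_point z L w"
    using exists_regular_points_left by blast
  obtain K where K: "\<forall>f\<in>Sol z L. \<forall>k. window_ge L f (N + 1) k \<longrightarrow> vanishes_below (op_act z B f 0) (k - K)"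
    using op_act_Sol_vanishes_below[OF assms(2) deg] N(1) by fastforce
  show ?thesis
    unfolding val_z_eq_INF using val_at_sol_infinity_or_int_ge[OF _ assms N(2) deg] K
    by (intro Inf_infinity_or_int[of _ "- K"]) blast
qed

lemma op_act_unit_initial_values:
  assumes "degree R < degree L" "k0 < degree L"
    and "\<And>j. j < degree L \<Longrightarrow> b (int j) = (if j = k0 then 1 else 0)"
  shows "op_act z R b 0 = rf_eval_q z (coeff R k0)"
proof -
  have "op_act z R b 0 = (\<Sum>i\<le>degree L - 1. rf_eval_q z (coeff R i) * b (int i))"
    using op_act_degree_le[of R "degree L - 1" z b 0] assms(1) by simp
  also have "\<dots> = (\<Sum>i\<le>degree L - 1. if i = k0 then rf_eval_q z (coeff R i) else 0)"
    using assms(2,3) by (intro sum.cong) auto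
  finally show ?thesis using assms(2) by simp
qed

text \<open>If B is not in the left ideal, its remainder modulo L has a nonzero coefficient at some
  S^k0 with k0 < r, and the solution whose initial values are the k0-th unit vector sees it.\<close>
lemma left_ideal_if_val_z_infinity:
  fixes z :: "'a::field_char_0"
  assumes "coeff L 0 \<noteq> 0" "lead_coeff L \<noteq> 0" "degree L \<ge> 1" "val_z z L B = \<infinity>"
  shows "in_left_ideal L B"
proof -
  obtain N :: int where N: "N \<le> -1" "\<forall>w\<le>N. regular_point z L w"
    using exists_regular_points_left by blast
  obtain A R where AR: "B = ore_mult A L + R" "\<forall>i\<ge>degree L. coeff R i = 0"
    using ore_division[OF assms(2)] by blast
  have "coeff R k0 = 0" if k0: "k0 < degree L" for k0
  proof -
    define b where "b = sol_extend z L (\<lambda>j. if j = int k0 then 1 else 0)"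
    have b: "b \<in> Sol z L" unfolding b_def by (rule sol_extend_Sol[OF assms(1,2)])
    have b_init: "b (int j) = (if j = k0 then 1 else 0)" if "j < degree L" for j
      using that by (simp add: b_def sol_extend_initial)
    have "window_val L b (N + 1) \<noteq> \<infinity>"
      using Sol_eq_0_right_of_zero_window[OF b assms(2,3), of "N + 1" k0] N(1) b_init[OF k0] by auto
    then obtain m :: int where "window_val L b (N + 1) = ereal (of_int m)"
      using window_val_infinity_or_int by blast
    moreover have "val_at_sol z B b = \<infinity>"
      using assms(4) b by (simp add: val_z_eq_INF INF_top_conv flip: top_ereal_def)
    ultimately have "op_act z B b 0 = 0"
      by (simp add: val_at_sol_eq_window_val[OF b assms(1,2) N(2) assms(3)] nu_q_def split: if_splits)
    moreover have "op_act z (ore_mult A L) b 0 = 0"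
      using b by (intro op_act_left_ideal_Sol) (auto simp: in_left_ideal_def)
    moreover have "degree R \<le> degree L - 1" using AR(2) by (intro degree_le) auto
    then have "degree R < degree L" using assms(3) by linarith
    ultimately show ?thesis
      using op_act_unit_initial_values[OF _ k0 b_init, of R z] AR(1) by (simp add: op_act_add)
  qed
  with AR(2) have "R = 0" by (metis leI poly_eqI coeff_0)
  with AR(1) show ?thesis unfolding in_left_ideal_def by auto
qed

lemma val_z_infinity_iff_left_ideal:
  fixes z :: "'a::field_char_0"
  assumes "coeff L 0 \<noteq> 0" "lead_coeff L \<noteq> 0"
  shows "val_z z L B = \<infinity> \<longleftrightarrow> in_left_ideal L B"
  using left_ideal_if_val_z_infinity[OF assms] left_ideal_degree_0[OF _ assms(2)] val_z_left_ideal
  by (cases "degree L = 0") auto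

theorem mainTheorem6:
  fixes Cs :: "'k::{alg_closed_field, field_char_0} set"
    and L :: "'k poly fract poly" and z :: 'k
  assumes "is_subfield Cs" and "algebraic_over Cs"
    and "\<forall>i. rf_over Cs (coeff L i)"
    and "coeff L 0 \<noteq> 0" and "lead_coeff L \<noteq> 0"
  shows "(\<forall>B1 B2. in_left_ideal L (B1 - B2) \<longrightarrow> val_z z L B1 = val_z z L B2)
    \<and> (\<forall>B. val_z z L B = \<infinity> \<or> (\<exists>k::int. val_z z L B = ereal (of_int k)))
    \<and> (\<forall>B. val_z z L B = \<infinity> \<longleftrightarrow> in_left_ideal L B)
    \<and> (\<forall>a B. val_z z L (smult a B) = nu_z z a + val_z z L B)
    \<and> (\<forall>B1 B2. val_z z L (B1 + B2) \<ge> min (val_z z L B1) (val_z z L B2))"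
proof (intro conjI allI impI)
  show "val_z z L B1 = val_z z L B2" if "in_left_ideal L (B1 - B2)" for B1 B2
    using that by (rule val_z_cong)
  show "val_z z L B = \<infinity> \<or> (\<exists>k::int. val_z z L B = ereal (of_int k))" for B
    using assms(4,5) by (rule val_z_infinity_or_int)
  show "val_z z L B = \<infinity> \<longleftrightarrow> in_left_ideal L B" for B
    using assms(4,5) by (rule val_z_infinity_iff_left_ideal)
  show "val_z z L (smult a B) = nu_z z a + val_z z L B" for a B
    by (rule val_z_smult)
  show "min (val_z z L B1) (val_z z L B2) \<le> val_z z L (B1 + B2)" for B1 B2
    by (rule val_z_add)
qed

end
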